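(* Let $P,Q,R\in\mathbb P_d$, and let $U_P:=\operatorname{Pol}(P^{1/2}R^{1/2})$ and $U_Q:=\operatorname{Pol}(Q^{1/2}R^{1/2})$. Then $$\operatorname{B}_R(P,Q)=\big\|U_P^*P^{1/2}-U_Q^*Q^{1/2}\big\|_2^2,$$ where $\|A\|_2=\sqrt{\operatorname{Tr}[A^*A]}$ is the Frobenius norm.
   Context: $\mathbb P_d$ is the set of $d\times d$ complex positive definite matrices. For an invertible matrix $A$, $\operatorname{Pol}(A):=A(A^*A)^{-1/2}$ is the unitary polar factor. The generalized fidelity is $\operatorname{F}_R(P,Q):=\operatorname{Tr}\big[\sqrt{R^{1/2}PR^{1/2}}\,R^{-1}\sqrt{R^{1/2}QR^{1/2}}\big]$ and the squared generalized Bures distance is $\operatorname{B}_R(P,Q):=\operatorname{Tr}[P+Q]-2\,\mathrm{Re}\,\operatorname{F}_R(P,Q)$. *)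

theory Defs
  imports "HOL-Analysis.Analysis"
begin

text \<open>Square complex matrices of size d = CARD('n), as elements of complex^'n^'n.\<close>

definition adj :: "complex^'n^'n \<Rightarrow> complex^'n^'n" where
  "adj A = (\<chi> i j. cnj (A $ j $ i))"

definition cinner_form :: "complex^'n^'n \<Rightarrow> complex^'n \<Rightarrow> complex" where
  "cinner_form A x = (\<Sum>i\<in>UNIV. cnj (x $ i) * (A *v x) $ i)"

definition hermitian :: "complex^'n^'n \<Rightarrow> bool" where
  "hermitian A \<longleftrightarrow> adj A = A"

definition psd :: "complex^'n^'n \<Rightarrow> bool" where
  "psd A \<longleftrightarrow> hermitian A \<and> (\<forall>x. 0 \<le> Re (cinner_form A x))"

definition posdef :: "complex^'n^'n \<Rightarrow> bool" where
  "posdef A \<longleftrightarrow> hermitian A \<and> (\<forall>x. x \<noteq> 0 \<longrightarrow> 0 < Re (cinner_form A x))"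

definition msqrt :: "complex^'n^'n \<Rightarrow> complex^'n^'n" where
  "msqrt A = (THE S. psd S \<and> S ** S = A)"

definition Pol :: "complex^'n^'n \<Rightarrow> complex^'n^'n" where
  "Pol A = A ** matrix_inv (msqrt (adj A ** A))"

definition gen_fidelity :: "complex^'n^'n \<Rightarrow> complex^'n^'n \<Rightarrow> complex^'n^'n \<Rightarrow> complex" where
  "gen_fidelity R P Q =
     trace (msqrt (msqrt R ** P ** msqrt R) ** matrix_inv R ** msqrt (msqrt R ** Q ** msqrt R))"

definition gen_bures :: "complex^'n^'n \<Rightarrow> complex^'n^'n \<Rightarrow> complex^'n^'n \<Rightarrow> complex" where
  "gen_bures R P Q = trace (P + Q) - 2 * complex_of_real (Re (gen_fidelity R P Q))"

definition frob_norm :: "complex^'n^'n \<Rightarrow> real" where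
  "frob_norm A = sqrt (Re (trace (adj A ** A)))"

end

theory Submission
  imports Defs
begin

text \<open>Write S = R^(1/2) and M_P = (S P S)^(1/2). Since (P^(1/2) S)^* (P^(1/2) S) = S P S,
  the polar factor satisfies U_P^* P^(1/2) = M_P^(-1) S P = M_P S^(-1). Expanding the squared
  Frobenius norm of M_P S^(-1) - M_Q S^(-1) gives Tr P + Tr Q - 2 Re Tr (M_P R^(-1) M_Q), because
  S^(-1) M_P^2 S^(-1) = P and the trace is cyclic. The substantial ingredient is that the positive
  square root is well defined, which rests on the spectral theorem for Hermitian matrices;
  eigenvectors are obtained by maximising the Rayleigh quotient on invariant subspaces.\<close>

section \<open>Adjoints and the standard inner product\<close>

definition cinner :: "complex^'n \<Rightarrow> complex^'n \<Rightarrow> complex" where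
  "cinner x y = (\<Sum>i\<in>UNIV. cnj (x $ i) * y $ i)"

definition diag_mat :: "('n \<Rightarrow> complex) \<Rightarrow> complex^'n^'n" where
  "diag_mat c = (\<chi> i j. if i = j then c i else 0)"

lemma adj_adj [simp]: "adj (adj A) = A"
  by (simp add: adj_def vec_eq_iff)

lemma adj_mult: "adj (A ** B) = adj B ** adj A"
  by (simp add: adj_def vec_eq_iff matrix_matrix_mult_def mult.commute)

lemma adj_diff: "adj (A - B) = adj A - adj B"
  by (simp add: adj_def vec_eq_iff)

lemma adj_mat_1 [simp]: "adj (mat 1) = mat 1"
  by (simp add: adj_def vec_eq_iff mat_def)

lemma adj_diag_mat: "adj (diag_mat c) = diag_mat (\<lambda>i. cnj (c i))"
  by (simp add: adj_def vec_eq_iff diag_mat_def)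

lemma trace_adj: "trace (adj A) = cnj (trace A)"
  by (simp add: trace_def adj_def)

lemma matrix_diff_ldistrib: "(A::'a::ring_1^'n^'m) ** (B - C) = A ** B - A ** C"
  by (simp add: matrix_matrix_mult_def vec_eq_iff sum_subtractf right_diff_distrib)

lemma matrix_diff_rdistrib: "((B::'a::ring_1^'n^'m) - C) ** A = B ** A - C ** A"
  by (simp add: matrix_matrix_mult_def vec_eq_iff sum_subtractf left_diff_distrib)

lemma matrix_vector_mult_scalar: "A *v (c *s x) = c *s (A *v (x::complex^'n))"
  by (simp add: matrix_vector_mult_def vec_eq_iff sum_distrib_left mult_ac)

lemma scaleR_eq_scalar_mult: "r *\<^sub>R (x::complex^'n) = complex_of_real r *s x"
  by (simp add: vec_eq_iff) (simp add: scaleR_conv_of_real)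

lemma diag_mat_mult: "diag_mat a ** diag_mat b = diag_mat (\<lambda>i. a i * b i)"
proof -
  have "(\<Sum>k\<in>UNIV. (if i = k then a i else 0) * (if k = j then b k else 0))
        = (if i = j then a i * b i else 0)" for i j
    by (subst sum.cong[where h = "\<lambda>k. if k = i then a i * (if i = j then b i else 0) else 0"]) auto
  then show ?thesis by (simp add: diag_mat_def matrix_matrix_mult_def vec_eq_iff)
qed

lemma diag_mat_vector_nth: "(diag_mat c *v x) $ i = c i * x $ i"
proof -
  have "(\<Sum>k\<in>UNIV. (if i = k then c i else 0) * x $ k) = (\<Sum>k\<in>UNIV. if k = i then c i * x $ i else 0)"
    by (rule sum.cong) auto
  then show ?thesis by (simp add: diag_mat_def matrix_vector_mult_def)
qed

lemma cinner_adj: "cinner x (A *v y) = cinner (adj A *v x) y"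
proof -
  have "cinner x (A *v y) = (\<Sum>i\<in>UNIV. \<Sum>j\<in>UNIV. cnj (x $ i) * (A $ i $ j * y $ j))"
    by (simp add: cinner_def matrix_vector_mult_def sum_distrib_left)
  also have "\<dots> = (\<Sum>j\<in>UNIV. \<Sum>i\<in>UNIV. cnj (x $ i) * (A $ i $ j * y $ j))"
    by (rule sum.swap)
  also have "\<dots> = cinner (adj A *v x) y"
    by (simp add: cinner_def matrix_vector_mult_def adj_def sum_distrib_left mult_ac)
  finally show ?thesis .
qed

lemma cinner_commute: "cinner y x = cnj (cinner x y)"
  by (simp add: cinner_def mult.commute)

lemma cinner_add_left: "cinner (x + y) z = cinner x z + cinner y z"
  by (simp add: cinner_def distrib_right sum.distrib)

lemma cinner_add_right: "cinner x (y + z) = cinner x y + cinner x z"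
  by (simp add: cinner_def distrib_left sum.distrib)

lemma cinner_diff_left: "cinner (x - y) z = cinner x z - cinner y z"
  by (simp add: cinner_def left_diff_distrib sum_subtractf)

lemma cinner_diff_right: "cinner x (y - z) = cinner x y - cinner x z"
  by (simp add: cinner_def right_diff_distrib sum_subtractf)

lemma cinner_scalar_left: "cinner (c *s x) y = cnj c * cinner x y"
  by (simp add: cinner_def sum_distrib_left mult_ac)

lemma cinner_scalar_right: "cinner x (c *s y) = c * cinner x y"
  by (simp add: cinner_def sum_distrib_left mult_ac)

lemma cinner_zero_left [simp]: "cinner 0 x = 0"
  by (simp add: cinner_def)

lemma cinner_zero_right [simp]: "cinner x 0 = 0"
  by (simp add: cinner_def)

lemmas cinner_simps = cinner_add_left cinner_add_right cinner_diff_left cinner_diff_right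
  cinner_scalar_left cinner_scalar_right

lemma cinner_self: "cinner x x = complex_of_real ((norm x)\<^sup>2)"
proof -
  have "cinner x x = (\<Sum>i\<in>UNIV. complex_of_real ((cmod (x $ i))\<^sup>2))"
    unfolding cinner_def by (metis complex_norm_square mult.commute)
  also have "\<dots> = complex_of_real ((norm x)\<^sup>2)"
    by (simp add: norm_vec_def L2_set_def sum_nonneg flip: of_real_sum of_real_power)
  finally show ?thesis .
qed

lemma cinner_self_eq_0 [simp]: "cinner x x = 0 \<longleftrightarrow> x = 0"
  by (simp add: cinner_self)

lemma cinner_form_eq_cinner: "cinner_form A x = cinner x (A *v x)"
  by (simp add: cinner_form_def cinner_def)

lemma hermitian_cinner: "hermitian A \<Longrightarrow> cinner x (A *v y) = cinner (A *v x) y"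
  using cinner_adj[of x A y] by (simp add: hermitian_def)

lemma hermitian_cinner_form_real: "hermitian A \<Longrightarrow> Im (cinner x (A *v x)) = 0"
  using hermitian_cinner[of A x x] cinner_commute[of "A *v x" x]
  by (metis cnj.simps(2) neg_equal_zero)

lemma hermitian_trace_real: "hermitian A \<Longrightarrow> Im (trace A) = 0"
  using trace_adj[of A] unfolding hermitian_def by (metis cnj.simps(2) neg_equal_zero)

section \<open>The spectral theorem for Hermitian matrices\<close>

lemma quadratic_nonpos_imp_linear_coeff_0:
  fixes a b :: real
  assumes "\<And>t. a * t + b * t\<^sup>2 \<le> 0"
  shows "a = 0"
proof (rule ccontr)
  assume a: "a \<noteq> 0"
  define d where "d = \<bar>b\<bar> + 1"
  have d: "d > 0" by (simp add: d_def)
  have "a * (a / d) + b * (a / d)\<^sup>2 = a\<^sup>2 * (d + b) / d\<^sup>2"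
    using d by (simp add: power2_eq_square field_simps)
  also have "\<dots> > 0"
    using a d by (intro divide_pos_pos mult_pos_pos) (auto simp: d_def)
  finally show False using assms[of "a / d"] by simp
qed

lemma rayleigh_max_orthogonal:
  fixes H :: "complex^'n^'n"
  assumes H: "hermitian H"
    and W: "\<And>x y c. x \<in> W \<Longrightarrow> y \<in> W \<Longrightarrow> x + c *s y \<in> W"
    and x: "x \<in> W" "norm x = 1"
    and max: "\<And>z. z \<in> W \<Longrightarrow> Re (cinner z (H *v z)) \<le> Re (cinner x (H *v x)) * (norm z)\<^sup>2"
    and y: "y \<in> W" "cinner x y = 0"
  shows "cinner y (H *v x) = 0"
proof -
  define M where "M = Re (cinner x (H *v x))"
  have Re_0: "Re (cinner y (H *v x)) = 0" if y: "y \<in> W" "cinner x y = 0" for y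
  proof -
    have yx: "cinner y x = 0" using y(2) cinner_commute[of y x] by simp
    have xHy: "cinner x (H *v y) = cnj (cinner y (H *v x))"
      using hermitian_cinner[OF H, of x y] cinner_commute[of "H *v x" y] by simp
    have "(2 * Re (cinner y (H *v x))) * t + (Re (cinner y (H *v y)) - M * (norm y)\<^sup>2) * t\<^sup>2 \<le> 0"
      for t :: real
    proof -
      define z where "z = x + complex_of_real t *s y"
      have "cinner z z = cinner x x + complex_of_real (t\<^sup>2) * cinner y y"
        using y(2) yx by (simp add: z_def cinner_simps power2_eq_square)
      then have "complex_of_real ((norm z)\<^sup>2) = 1 + complex_of_real (t\<^sup>2 * (norm y)\<^sup>2)"
        using x(2) by (simp add: cinner_self)
      then have "(norm z)\<^sup>2 = 1 + t\<^sup>2 * (norm y)\<^sup>2"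
        by (metis of_real_1 of_real_add of_real_eq_iff)
      moreover have "cinner z (H *v z) = cinner x (H *v x) + complex_of_real t * cinner x (H *v y)
           + complex_of_real t * cinner y (H *v x) + complex_of_real (t\<^sup>2) * cinner y (H *v y)"
        by (simp add: z_def matrix_vector_mult_scalar cinner_simps
            power2_eq_square algebra_simps)
      then have "Re (cinner z (H *v z)) = M + 2 * t * Re (cinner y (H *v x)) + t\<^sup>2 * Re (cinner y (H *v y))"
        by (simp add: M_def xHy)
      moreover have "Re (cinner z (H *v z)) \<le> M * (norm z)\<^sup>2"
        using max W[OF x(1) y(1)] by (simp add: M_def z_def)
      ultimately show ?thesis by (simp add: algebra_simps)
    qed
    then show ?thesis using quadratic_nonpos_imp_linear_coeff_0 by fastforce
  qed
  have "0 \<in> W" using W[OF y(1) y(1), of "-1"] by simp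
  then have "\<i> *s y \<in> W" using W[of 0 y] y(1) by simp
  then have "Re (cinner (\<i> *s y) (H *v x)) = 0"
    using Re_0 y(2) by (simp add: cinner_scalar_right)
  then show ?thesis using Re_0[OF y] by (simp add: cinner_scalar_left complex_eq_iff)
qed

lemma rayleigh_max_eigvec:
  fixes H :: "complex^'n^'n"
  assumes H: "hermitian H"
    and W: "\<And>x y c. x \<in> W \<Longrightarrow> y \<in> W \<Longrightarrow> x + c *s y \<in> W"
    and inv: "\<And>x. x \<in> W \<Longrightarrow> H *v x \<in> W"
    and x: "x \<in> W" "norm x = 1"
    and max: "\<And>z. z \<in> W \<Longrightarrow> Re (cinner z (H *v z)) \<le> Re (cinner x (H *v x)) * (norm z)\<^sup>2"
  shows "H *v x = cinner x (H *v x) *s x"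
proof -
  define l where "l = cinner x (H *v x)"
  define z where "z = H *v x - l *s x"
  have xx: "cinner x x = 1" using x(2) by (simp add: cinner_self)
  have "z \<in> W" using W[OF inv[OF x(1)] x(1), of "- l"] by (simp add: z_def)
  moreover have xz: "cinner x z = 0" by (simp add: z_def cinner_simps xx l_def)
  ultimately have "cinner z (H *v x) = 0"
    using rayleigh_max_orthogonal[OF H W x max] by blast
  moreover have "cinner z x = 0" using xz cinner_commute[of z x] by simp
  ultimately have "cinner z z = 0"
    by (simp add: z_def cinner_diff_right cinner_scalar_right)
  then show ?thesis by (simp add: z_def l_def)
qed

lemma hermitian_unit_eigvec_in_invariant_subspace:
  fixes H :: "complex^'n^'n"
  assumes H: "hermitian H" and "closed W"
    and W: "\<And>x y c. x \<in> W \<Longrightarrow> y \<in> W \<Longrightarrow> x + c *s y \<in> W"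
    and inv: "\<And>x. x \<in> W \<Longrightarrow> H *v x \<in> W"
    and w: "w \<in> W" "w \<noteq> 0"
  shows "\<exists>x\<in>W. norm x = 1 \<and> H *v x = cinner x (H *v x) *s x"
proof -
  define f where "f x = Re (cinner x (H *v x))" for x
  have "0 \<in> W" using W[OF w(1) w(1), of "-1"] by simp
  then have scale: "c *s z \<in> W" if "z \<in> W" for c z using W[of 0 z] that by simp
  have normalize: "(1 / norm z) *\<^sub>R z \<in> W \<inter> sphere 0 1" if "z \<in> W" "z \<noteq> 0" for z
  proof -
    have "(1 / norm z) *\<^sub>R z \<in> W" unfolding scaleR_eq_scalar_mult using scale that(1) .
    then show ?thesis using that(2) by simp
  qed
  have "compact (W \<inter> sphere 0 1)"
    using \<open>closed W\<close> by (intro closed_Int_compact compact_sphere)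
  moreover have "W \<inter> sphere 0 1 \<noteq> {}" using normalize[OF w] by blast
  moreover have "continuous_on (W \<inter> sphere 0 1) f"
    unfolding f_def cinner_def matrix_vector_mult_def by (intro continuous_intros)
  ultimately obtain x where x: "x \<in> W" "norm x = 1" and xmax: "\<forall>y\<in>W \<inter> sphere 0 1. f y \<le> f x"
    using continuous_attains_sup by (metis IntD1 IntD2 mem_sphere_0)
  have "f z \<le> f x * (norm z)\<^sup>2" if "z \<in> W" for z
  proof (cases "z = 0")
    case False
    have "f ((1 / norm z) *\<^sub>R z) = f z / (norm z)\<^sup>2"
      by (simp add: f_def scaleR_eq_scalar_mult matrix_vector_mult_scalar cinner_simps
          power2_eq_square)
    moreover have "f ((1 / norm z) *\<^sub>R z) \<le> f x" using xmax normalize[OF that False] by blast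
    ultimately show ?thesis
      using False by (simp add: field_simps) (metis mult_left_mono mult.commute zero_le_power2)
  qed (simp add: f_def)
  then show ?thesis
    using rayleigh_max_eigvec[OF H W inv x] x unfolding f_def by blast
qed

lemma hermitian_unit_eigvec_orthogonal:
  fixes H :: "complex^'n^'n"
  assumes H: "hermitian H"
    and eig: "\<And>b. b \<in> B \<Longrightarrow> \<exists>c. H *v b = c *s b"
    and w: "\<forall>b\<in>B. cinner b w = 0" "w \<noteq> 0"
  shows "\<exists>x. (\<forall>b\<in>B. cinner b x = 0) \<and> norm x = 1 \<and> (\<exists>c. H *v x = c *s x)"
proof -
  define W where "W = {x. \<forall>b\<in>B. cinner b x = 0}"
  have "W = (\<Inter>b\<in>B. {x. cinner b x = 0})" by (auto simp: W_def)
  moreover have "closed {x. cinner b x = 0}" for b :: "complex^'n"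
    unfolding cinner_def by (intro closed_Collect_eq continuous_intros)
  ultimately have "closed W" by auto
  moreover have "x + c *s y \<in> W" if "x \<in> W" "y \<in> W" for x y c
    using that by (simp add: W_def cinner_simps)
  moreover have "H *v x \<in> W" if "x \<in> W" for x
  proof -
    have "cinner b (H *v x) = 0" if b: "b \<in> B" for b
    proof -
      obtain c where "H *v b = c *s b" using eig[OF b] by blast
      then show ?thesis
        using hermitian_cinner[OF H, of b x] \<open>x \<in> W\<close> b by (simp add: W_def cinner_simps)
    qed
    then show ?thesis by (simp add: W_def)
  qed
  moreover have "w \<in> W" using w(1) by (simp add: W_def)
  ultimately obtain x where "x \<in> W" "norm x = 1" "H *v x = cinner x (H *v x) *s x"
    using hermitian_unit_eigvec_in_invariant_subspace[OF H] w(2) by blast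
  then show ?thesis unfolding W_def by blast
qed

lemma exists_nonzero_orthogonal:
  fixes u :: "'n \<Rightarrow> complex^'n"
  assumes "a \<notin> J"
  shows "\<exists>x. (\<forall>b\<in>u ` J. cinner b x = 0) \<and> x \<noteq> 0"
proof -
  define M :: "complex^'n^'n" where "M = (\<chi> i. if i \<in> J then (\<chi> k. cnj (u i $ k)) else 0)"
  have "row a M = 0" using assms by (simp add: M_def row_def vec_eq_iff)
  then have "det M = 0" by (rule det_zero_row(2))
  then have "\<not> (\<exists>B. B ** M = mat 1)"
    using invertible_det_nz invertible_left_inverse by blast
  then obtain x where x: "M *v x = 0" "x \<noteq> 0"
    using matrix_left_invertible_ker(1)[of M] by blast
  have "cinner (u i) x = (M *v x) $ i" if "i \<in> J" for i
    using that by (simp add: M_def matrix_vector_mult_def cinner_def)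
  then show ?thesis using x by auto
qed

lemma hermitian_orthonormal_eigvecs:
  fixes H :: "complex^'n^'n" and J :: "'n set"
  assumes H: "hermitian H"
  shows "\<exists>u. (\<forall>i\<in>J. \<forall>j\<in>J. cinner (u i) (u j) = (if i = j then 1 else 0))
           \<and> (\<forall>i\<in>J. \<exists>c. H *v u i = c *s u i)"
  using finite[of J]
proof (induction J rule: finite_induct)
  case (insert a J)
  then obtain u where u_orth: "\<forall>i\<in>J. \<forall>j\<in>J. cinner (u i) (u j) = (if i = j then 1 else 0)"
    and u_eig: "\<forall>i\<in>J. \<exists>c. H *v u i = c *s u i" by blast
  obtain w where "\<forall>b\<in>u ` J. cinner b w = 0" "w \<noteq> 0"
    using exists_nonzero_orthogonal[OF insert(2)] by blast
  moreover have "\<exists>c. H *v b = c *s b" if "b \<in> u ` J" for b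
    using u_eig that by blast
  ultimately obtain v where v_orth: "\<forall>b\<in>u ` J. cinner b v = 0" and "norm v = 1"
    and v_eig: "\<exists>c. H *v v = c *s v"
    using hermitian_unit_eigvec_orthogonal[OF H, of "u ` J" w] by blast
  then have vv: "cinner v v = 1" by (simp add: cinner_self)
  have v_orth': "cinner v (u j) = 0" if "j \<in> J" for j
    using v_orth that cinner_commute[of v "u j"] by simp
  let ?u = "u(a := v)"
  have "cinner (?u i) (?u j) = (if i = j then 1 else 0)" if "i \<in> insert a J" "j \<in> insert a J" for i j
  proof -
    have "i \<in> J \<Longrightarrow> j \<in> J \<Longrightarrow> cinner (u i) (u j) = (if i = j then 1 else 0)"
      using u_orth by blast
    moreover have "i \<in> J \<Longrightarrow> cinner (u i) v = 0" using v_orth by blast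
    ultimately show ?thesis
      using that insert(2) v_orth' vv by (cases "i = a"; cases "j = a") auto
  qed
  moreover have "\<exists>c. H *v ?u i = c *s ?u i" if "i \<in> insert a J" for i
    using that u_eig v_eig by (cases "i = a") simp_all
  ultimately show ?case by blast
qed simp

definition column_matrix :: "('n \<Rightarrow> complex^'n) \<Rightarrow> complex^'n^'n" where
  "column_matrix u = (\<chi> i j. u j $ i)"

lemma hermitian_spectral_decomposition:
  fixes H :: "complex^'n^'n"
  assumes H: "hermitian H"
  obtains u c where "\<And>i j. cinner (u i) (u j) = (if i = j then 1 else 0)"
    and "\<And>i. H *v u i = complex_of_real (c i) *s u i"
    and "adj (column_matrix u) ** column_matrix u = mat 1"
    and "H = column_matrix u ** diag_mat (\<lambda>i. complex_of_real (c i)) ** adj (column_matrix u)"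
proof -
  obtain u :: "'n \<Rightarrow> complex^'n" where u_orth: "\<forall>i j. cinner (u i) (u j) = (if i = j then 1 else 0)"
    and u_eig: "\<forall>i. \<exists>c. H *v u i = c *s u i"
    using hermitian_orthonormal_eigvecs[OF H, of UNIV] by auto
  define c where "c i = Re (cinner (u i) (H *v u i))" for i
  have eig: "H *v u i = complex_of_real (c i) *s u i" for i
  proof -
    obtain d where d: "H *v u i = d *s u i" using u_eig by blast
    have "cinner (u i) (H *v u i) = d" using u_orth by (simp add: d cinner_scalar_right)
    then have "d = complex_of_real (c i)"
      using hermitian_cinner_form_real[OF H] by (simp add: c_def complex_eq_iff)
    then show ?thesis using d by simp
  qed
  define U where "U = column_matrix u"
  have UU: "adj U ** U = mat 1"
    using u_orth
    by (simp add: U_def column_matrix_def adj_def matrix_matrix_mult_def mat_def vec_eq_iff cinner_def)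
  have HU: "H ** U = U ** diag_mat (\<lambda>i. complex_of_real (c i))"
  proof -
    have "(\<Sum>k\<in>UNIV. u k $ i * (if k = j then complex_of_real (c k) else 0))
        = u j $ i * complex_of_real (c j)" for i j
      by (subst sum.cong[where h = "\<lambda>k. if k = j then u j $ i * complex_of_real (c j) else 0"]) auto
    then show ?thesis
      using eig
      by (simp add: U_def column_matrix_def matrix_matrix_mult_def matrix_vector_mult_def
          diag_mat_def vec_eq_iff mult.commute)
  qed
  have "U ** adj U = mat 1" using UU matrix_left_right_inverse by blast
  then have "H = H ** U ** adj U" by (metis matrix_mul_assoc matrix_mul_rid)
  then have "H = U ** diag_mat (\<lambda>i. complex_of_real (c i)) ** adj U" by (simp add: HU)
  then show ?thesis using that[of u c] u_orth eig UU unfolding U_def by blast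
qed

section \<open>Positive semidefinite square roots\<close>

lemma psd_unitary_conj_diag_mat:
  assumes "\<And>i. d i \<ge> 0"
  shows "psd (U ** diag_mat (\<lambda>i. complex_of_real (d i)) ** adj U)"
proof -
  let ?D = "diag_mat (\<lambda>i. complex_of_real (d i))"
  have "adj (U ** ?D ** adj U) = U ** ?D ** adj U"
    by (simp add: adj_mult adj_diag_mat matrix_mul_assoc)
  moreover have "0 \<le> Re (cinner_form (U ** ?D ** adj U) x)" for x
  proof -
    define y where "y = adj U *v x"
    have "cinner_form (U ** ?D ** adj U) x = cinner y (?D *v y)"
      by (simp add: cinner_form_eq_cinner y_def matrix_vector_mul_assoc cinner_adj
          flip: matrix_vector_mul_assoc)
    also have "\<dots> = (\<Sum>i\<in>UNIV. complex_of_real (d i) * (cnj (y $ i) * y $ i))"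
      by (simp add: cinner_def diag_mat_vector_nth mult_ac)
    finally show ?thesis using assms by (auto intro!: sum_nonneg)
  qed
  ultimately show ?thesis by (simp add: psd_def hermitian_def)
qed

lemma psd_sqrt_exists:
  assumes A: "psd A"
  shows "\<exists>S. psd S \<and> S ** S = A"
proof -
  obtain u c where u_orth: "\<And>i j. cinner (u i) (u j) = (if i = j then 1 else 0)"
    and eig: "\<And>i. A *v u i = complex_of_real (c i) *s u i"
    and UU: "adj (column_matrix u) ** column_matrix u = mat 1"
    and A_eq: "A = column_matrix u ** diag_mat (\<lambda>i. complex_of_real (c i)) ** adj (column_matrix u)"
    using hermitian_spectral_decomposition A unfolding psd_def by blast
  have c_nonneg: "c i \<ge> 0" for i
  proof -
    have "Re (cinner (u i) (A *v u i)) = c i"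
      using eig[of i] u_orth[of i i] by (simp add: cinner_scalar_right)
    then show ?thesis using A by (metis psd_def cinner_form_eq_cinner)
  qed
  define U where "U = column_matrix u"
  define D where "D = diag_mat (\<lambda>i. complex_of_real (sqrt (c i)))"
  have psd_root: "psd (U ** D ** adj U)"
    unfolding D_def using c_nonneg by (intro psd_unitary_conj_diag_mat) simp
  have "(U ** D ** adj U) ** (U ** D ** adj U) = U ** D ** (adj U ** U) ** D ** adj U"
    by (simp add: matrix_mul_assoc)
  also have "\<dots> = U ** (D ** D) ** adj U"
    using UU by (simp add: U_def matrix_mul_assoc)
  also have "D ** D = diag_mat (\<lambda>i. complex_of_real (c i))"
    using c_nonneg by (simp add: D_def diag_mat_mult flip: of_real_mult)
  finally have "(U ** D ** adj U) ** (U ** D ** adj U) = A"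
    by (simp add: A_eq U_def)
  with psd_root show ?thesis by blast
qed

text \<open>Expanding |S x|^2 = |T x|^2 with S x = T x + m x gives m^2 = 2 m <x, S x> = -2 m <x, T x>,
  and positivity forces m = 0.\<close>
lemma psd_sqrt_diff_eigval_eq_0:
  assumes S: "psd S" and T: "psd T" and ST: "S ** S = T ** T"
    and x: "cinner x x = 1" and eig: "(S - T) *v x = complex_of_real m *s x"
  shows "m = 0"
proof (rule ccontr)
  assume "m \<noteq> 0"
  have hS: "hermitian S" and hT: "hermitian T" using S T by (auto simp: psd_def)
  define a where "a = cinner x (S *v x)"
  define b where "b = cinner x (T *v x)"
  have Sx: "S *v x = T *v x + complex_of_real m *s x" and Tx: "T *v x = S *v x - complex_of_real m *s x"
    using eig by (simp_all add: algebra_simps)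
  have a': "cinner (S *v x) x = a" and b': "cinner (T *v x) x = b"
    using hermitian_cinner[OF hS, of x x] hermitian_cinner[OF hT, of x x] by (simp_all add: a_def b_def)
  have "cinner (S *v x) (S *v x) = cinner x ((S ** S) *v x)"
    using hermitian_cinner[OF hS, of x "S *v x"] by (simp add: matrix_vector_mul_assoc)
  also have "\<dots> = cinner (T *v x) (T *v x)"
    using hermitian_cinner[OF hT, of x "T *v x"] by (simp add: ST matrix_vector_mul_assoc)
  finally have SS_TT: "cinner (S *v x) (S *v x) = cinner (T *v x) (T *v x)" .
  have "cinner (S *v x) (S *v x) = cinner (T *v x) (T *v x) + 2 * m * b + m * m"
    by (simp add: Sx cinner_simps b' x b_def[symmetric] algebra_simps)
  then have "complex_of_real m * m + 2 * m * b = 0" using SS_TT by (simp add: algebra_simps)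
  from arg_cong[where f = Re, OF this] have "m * m = m * (- 2 * Re b)"
    by (simp add: algebra_simps)
  then have m_b: "m = - 2 * Re b" using \<open>m \<noteq> 0\<close> by (metis mult_left_cancel)
  have "cinner (T *v x) (T *v x) = cinner (S *v x) (S *v x) - 2 * m * a + m * m"
    unfolding Tx by (simp add: cinner_simps a' x a_def[symmetric] algebra_simps)
  then have "complex_of_real m * m - 2 * m * a = 0" using SS_TT by (simp add: algebra_simps) metis
  from arg_cong[where f = Re, OF this] have "m * m = m * (2 * Re a)"
    by (simp add: algebra_simps)
  then have m_a: "m = 2 * Re a" using \<open>m \<noteq> 0\<close> by (metis mult_left_cancel)
  have "Re a \<ge> 0" "Re b \<ge> 0"
    using S T by (simp_all add: psd_def a_def b_def cinner_form_eq_cinner)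
  with m_a m_b \<open>m \<noteq> 0\<close> show False by linarith
qed

lemma psd_sqrt_unique:
  assumes S: "psd S" and T: "psd T" and ST: "S ** S = T ** T"
  shows "S = T"
proof -
  have "hermitian (S - T)" using S T by (simp add: psd_def hermitian_def adj_diff)
  then obtain u c where u_orth: "\<And>i j. cinner (u i) (u j) = (if i = j then 1 else 0)"
    and eig: "\<And>i. (S - T) *v u i = complex_of_real (c i) *s u i"
    and D_eq: "S - T = column_matrix u ** diag_mat (\<lambda>i. complex_of_real (c i)) ** adj (column_matrix u)"
    by (rule hermitian_spectral_decomposition) blast
  have "c i = 0" for i
    using psd_sqrt_diff_eigval_eq_0[OF S T ST _ eig] u_orth by simp
  then have "diag_mat (\<lambda>i. complex_of_real (c i)) = 0"
    by (simp add: diag_mat_def vec_eq_iff)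
  moreover have "A ** (0::complex^'n^'n) = 0" "(0::complex^'n^'n) ** A = 0" for A :: "complex^'n^'n"
    by (simp_all add: matrix_matrix_mult_def vec_eq_iff)
  ultimately show ?thesis using D_eq by simp
qed

lemma psd_msqrt:
  assumes "psd A"
  shows "psd (msqrt A)" and "msqrt A ** msqrt A = A"
proof -
  have "\<exists>!S. psd S \<and> S ** S = A"
    using psd_sqrt_exists[OF assms] psd_sqrt_unique by blast
  then have "psd (msqrt A) \<and> msqrt A ** msqrt A = A"
    unfolding msqrt_def by (rule theI')
  then show "psd (msqrt A)" "msqrt A ** msqrt A = A" by auto
qed

section \<open>Inverses and positive definite matrices\<close>

lemma matrix_inv:
  fixes A :: "'a::semiring_1^'n^'n"
  assumes "invertible A"
  shows matrix_inv_right: "A ** matrix_inv A = mat 1"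
    and matrix_inv_left: "matrix_inv A ** A = mat 1"
proof -
  have "A ** matrix_inv A = mat 1 \<and> matrix_inv A ** A = mat 1"
    using assms unfolding invertible_def matrix_inv_def by (rule someI_ex)
  then show "A ** matrix_inv A = mat 1" "matrix_inv A ** A = mat 1" by auto
qed

lemma matrix_inv_unique_left:
  fixes A B :: "'a::field^'n^'n"
  assumes "B ** A = mat 1"
  shows "matrix_inv A = B"
proof -
  have "invertible A" using assms invertible_left_inverse by blast
  have "matrix_inv A = (B ** A) ** matrix_inv A" using assms by simp
  also have "\<dots> = B" using \<open>invertible A\<close> by (simp add: matrix_inv_right flip: matrix_mul_assoc)
  finally show ?thesis .
qed

lemma matrix_inv_mult_self:
  fixes S :: "'a::field^'n^'n"
  assumes "invertible S"
  shows "matrix_inv (S ** S) = matrix_inv S ** matrix_inv S"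
proof (rule matrix_inv_unique_left)
  have "matrix_inv S ** (matrix_inv S ** S) ** S = mat 1"
    using assms by (simp add: matrix_inv_left)
  then show "matrix_inv S ** matrix_inv S ** (S ** S) = mat 1"
    by (simp add: matrix_mul_assoc)
qed

lemma invertible_mult_self_imp_invertible:
  fixes S :: "'a::field^'n^'n"
  assumes "invertible (S ** S)"
  shows "invertible S"
proof -
  have "(matrix_inv (S ** S) ** S) ** S = mat 1"
    using matrix_inv_left[OF assms] by (simp add: matrix_mul_assoc)
  then show ?thesis using invertible_left_inverse by blast
qed

lemma hermitian_matrix_inv:
  assumes "invertible A" "hermitian A"
  shows "hermitian (matrix_inv A)"
proof -
  have "adj (matrix_inv A) ** A = adj (A ** matrix_inv A)"
    using assms(2) by (simp add: adj_mult hermitian_def)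
  also have "\<dots> = mat 1" using assms(1) by (simp add: matrix_inv_right)
  finally show ?thesis
    using matrix_inv_unique_left unfolding hermitian_def by metis
qed

lemma posdef_imp_psd: "posdef A \<Longrightarrow> psd A"
  unfolding posdef_def psd_def cinner_form_eq_cinner
  by (metis cinner_zero_left order.strict_implies_order order.refl zero_complex.simps(1))

lemma posdef_imp_invertible:
  assumes "posdef A"
  shows "invertible A"
proof -
  have "x = 0" if "A *v x = 0" for x
  proof (rule ccontr)
    assume "x \<noteq> 0"
    then have "0 < Re (cinner_form A x)" using assms by (simp add: posdef_def)
    then show False using that by (simp add: cinner_form_eq_cinner)
  qed
  then show ?thesis
    using matrix_left_invertible_ker(1) invertible_left_inverse by blast
qed

lemma psd_hermitian_sandwich:
  assumes P: "psd P" and X: "hermitian X"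
  shows "psd (X ** P ** X)"
proof -
  have "adj (X ** P ** X) = X ** P ** X"
    using P X by (simp add: adj_mult psd_def hermitian_def matrix_mul_assoc)
  moreover have "cinner_form (X ** P ** X) x = cinner (X *v x) (P *v (X *v x))" for x
    using hermitian_cinner[OF X, of x "P *v (X *v x)"]
    by (simp add: cinner_form_eq_cinner matrix_vector_mul_assoc matrix_mul_assoc)
  ultimately show ?thesis using P by (simp add: psd_def hermitian_def cinner_form_eq_cinner)
qed

lemma posdef_msqrt:
  assumes "posdef A"
  shows "hermitian (msqrt A)" "invertible (msqrt A)" "msqrt A ** msqrt A = A"
proof -
  show sq: "msqrt A ** msqrt A = A" and "hermitian (msqrt A)"
    using psd_msqrt[OF posdef_imp_psd[OF assms]] by (auto simp: psd_def)
  show "invertible (msqrt A)"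
    using invertible_mult_self_imp_invertible[of "msqrt A"] posdef_imp_invertible[OF assms] sq by simp
qed

section \<open>The generalized Bures distance\<close>

lemma adj_Pol_mult_msqrt:
  assumes P: "posdef P" and S: "hermitian S" "invertible S"
  shows "adj (Pol (msqrt P ** S)) ** msqrt P = msqrt (S ** P ** S) ** matrix_inv S"
proof -
  define M where "M = msqrt (S ** P ** S)"
  have M: "psd M" "M ** M = S ** P ** S"
    unfolding M_def using psd_msqrt psd_hermitian_sandwich[OF posdef_imp_psd[OF P] S(1)] by blast+
  have "invertible (S ** P ** S)"
    using S(2) posdef_imp_invertible[OF P] by (simp add: invertible_mult)
  then have "invertible M" using M(2) invertible_mult_self_imp_invertible by metis
  then have M_inv: "hermitian (matrix_inv M)" "matrix_inv M ** M = mat 1"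
    using M(1) hermitian_matrix_inv matrix_inv_left unfolding psd_def by blast+
  have sP: "hermitian (msqrt P)" "msqrt P ** msqrt P = P" using posdef_msqrt[OF P] by auto
  have "adj (msqrt P ** S) ** (msqrt P ** S) = S ** (msqrt P ** msqrt P) ** S"
    using S(1) sP(1) by (simp add: adj_mult hermitian_def matrix_mul_assoc)
  then have "adj (msqrt P ** S) ** (msqrt P ** S) = S ** P ** S" by (simp add: sP(2))
  then have "adj (Pol (msqrt P ** S)) ** msqrt P = matrix_inv M ** S ** (msqrt P ** msqrt P)"
    using S(1) sP(1) M_inv(1)
    by (simp add: Pol_def M_def adj_mult hermitian_def matrix_mul_assoc)
  also have "\<dots> = matrix_inv M ** (M ** M) ** matrix_inv S"
    using S(2) by (simp add: M(2) sP(2) matrix_inv_right flip: matrix_mul_assoc)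
  also have "\<dots> = M ** matrix_inv S"
    using M_inv(2) by (simp add: matrix_mul_assoc)
  finally show ?thesis by (simp add: M_def)
qed

lemma trace_adj_mult_self:
  "trace (adj X ** X) = complex_of_real (\<Sum>i\<in>UNIV. \<Sum>k\<in>UNIV. (cmod (X $ k $ i))\<^sup>2)"
proof -
  have "cnj z * z = complex_of_real ((cmod z)\<^sup>2)" for z :: complex
    by (metis complex_norm_square mult.commute)
  then show ?thesis by (simp add: trace_def adj_def matrix_matrix_mult_def)
qed

lemma frob_norm_sq: "(frob_norm X)\<^sup>2 = Re (trace (adj X ** X))"
  by (simp add: frob_norm_def trace_adj_mult_self sum_nonneg)

lemma frob_norm_diff_sq:
  "(frob_norm (X - Y))\<^sup>2 = (frob_norm X)\<^sup>2 + (frob_norm Y)\<^sup>2 - 2 * Re (trace (adj X ** Y))"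
proof -
  have "trace (adj Y ** X) = cnj (trace (adj X ** Y))"
    by (metis adj_adj adj_mult trace_adj)
  then show ?thesis
    by (simp add: frob_norm_sq adj_diff matrix_diff_ldistrib matrix_diff_rdistrib trace_sub)
qed

lemma frob_norm_sq_msqrt_sandwich:
  assumes P: "psd P" and S: "hermitian S" "invertible S"
  shows "(frob_norm (msqrt (S ** P ** S) ** matrix_inv S))\<^sup>2 = Re (trace P)"
proof -
  define M where "M = msqrt (S ** P ** S)"
  have M: "hermitian M" "M ** M = S ** P ** S"
    unfolding M_def using psd_msqrt psd_hermitian_sandwich[OF P S(1)] unfolding psd_def by blast+
  have "hermitian (matrix_inv S)" using hermitian_matrix_inv S by blast
  then have "adj (M ** matrix_inv S) ** (M ** matrix_inv S) = matrix_inv S ** (M ** M) ** matrix_inv S"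
    using M(1) by (simp add: adj_mult hermitian_def matrix_mul_assoc)
  also have "\<dots> = (matrix_inv S ** S) ** P ** (S ** matrix_inv S)"
    by (simp add: M(2) matrix_mul_assoc)
  also have "\<dots> = P" using S(2) by (simp add: matrix_inv_left matrix_inv_right)
  finally show ?thesis by (simp add: frob_norm_sq M_def)
qed

lemma Re_trace_adj_mult_hermitian:
  assumes "hermitian A" "hermitian B" "hermitian T"
  shows "Re (trace (adj (A ** T) ** (B ** T))) = Re (trace (A ** (T ** T) ** B))"
proof -
  have "trace (adj (A ** T) ** (B ** T)) = trace (T ** (A ** B ** T))"
    using assms by (simp add: adj_mult hermitian_def matrix_mul_assoc)
  also have "\<dots> = trace (A ** (B ** (T ** T)))"
    using trace_mul_sym[of T "A ** B ** T"] by (simp add: matrix_mul_assoc)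
  also have "\<dots> = trace (B ** (T ** T) ** A)"
    using trace_mul_sym[of A "B ** (T ** T)"] by (simp add: matrix_mul_assoc)
  also have "\<dots> = cnj (trace (A ** (T ** T) ** B))"
    using assms by (simp add: adj_mult hermitian_def matrix_mul_assoc flip: trace_adj)
  finally show ?thesis by simp
qed

theorem mainTheorem2:
  fixes P Q R :: "complex^'n^'n"
  assumes "posdef P" and "posdef Q" and "posdef R"
  shows "gen_bures R P Q =
    complex_of_real ((frob_norm (adj (Pol (msqrt P ** msqrt R)) ** msqrt P
                                 - adj (Pol (msqrt Q ** msqrt R)) ** msqrt Q))\<^sup>2)"
proof -
  note sR = posdef_msqrt[OF \<open>posdef R\<close>]
  define T where "T = matrix_inv (msqrt R)"
  define MP where "MP = msqrt (msqrt R ** P ** msqrt R)"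
  define MQ where "MQ = msqrt (msqrt R ** Q ** msqrt R)"
  have "hermitian MP" "hermitian MQ"
    using psd_msqrt(1) psd_hermitian_sandwich[OF posdef_imp_psd sR(1)] assms
    unfolding MP_def MQ_def psd_def by blast+
  moreover have "hermitian T" using hermitian_matrix_inv sR by (simp add: T_def)
  moreover have "matrix_inv R = T ** T"
    using matrix_inv_mult_self[OF sR(2)] sR(3) by (simp add: T_def)
  ultimately have fid: "Re (trace (adj (MP ** T) ** (MQ ** T))) = Re (gen_fidelity R P Q)"
    using Re_trace_adj_mult_hermitian by (simp add: gen_fidelity_def MP_def MQ_def)
  have "(frob_norm (adj (Pol (msqrt P ** msqrt R)) ** msqrt P
                    - adj (Pol (msqrt Q ** msqrt R)) ** msqrt Q))\<^sup>2
        = (frob_norm (MP ** T - MQ ** T))\<^sup>2"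
    using adj_Pol_mult_msqrt[OF \<open>posdef P\<close> sR(1,2)] adj_Pol_mult_msqrt[OF \<open>posdef Q\<close> sR(1,2)]
    by (simp add: T_def MP_def MQ_def)
  also have "\<dots> = Re (trace P) + Re (trace Q) - 2 * Re (gen_fidelity R P Q)"
    using frob_norm_sq_msqrt_sandwich[OF posdef_imp_psd[OF \<open>posdef P\<close>] sR(1,2)]
      frob_norm_sq_msqrt_sandwich[OF posdef_imp_psd[OF \<open>posdef Q\<close>] sR(1,2)]
    by (simp add: frob_norm_diff_sq fid flip: T_def MP_def MQ_def)
  moreover have "Im (trace P) = 0" "Im (trace Q) = 0"
    using hermitian_trace_real assms unfolding posdef_def by blast+
  ultimately show ?thesis by (simp add: gen_bures_def trace_add complex_eq_iff)
qed

end
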